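(* Let $k\ge1$ be an integer. If $\pi$ is a graphical sequence of length $n$ such that every graphical sequence $\pi'\le\pi$ (termwise) of length $n$ is forcibly $\chi(G)\le 2k$, then every graphical sequence $\pi'\le\pi$ of length $n$ is forcibly $a(G)\le k$. That is, $\mathrm{BM}(\chi(G)\le2k)\subseteq\mathrm{BM}(a(G)\le k)$.
   Context: Graphs are finite and simple; a graphical sequence is a nondecreasing integer sequence that is the degree sequence of some graph (a realization). A graphical sequence is forcibly $P$ if every realization has $P$. For a decreasing property $P$ (preserved under deleting edges), $\mathrm{BM}(P)$ is the set of graphical sequences $\pi$ such that every graphical sequence of the same length that is termwise at most $\pi$ is forcibly $P$. $\chi$ is the chromatic number; the vertex arboricity $a(G)$ is the minimum number of parts in a partition of $V(G)$ into sets each inducing a forest. *)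

theory Defs
  imports Main
begin

definition simple_graph :: "nat \<Rightarrow> nat set set \<Rightarrow> bool" where
  "simple_graph n E \<longleftrightarrow> (\<forall>e\<in>E. e \<subseteq> {0..<n} \<and> card e = 2)"

definition adj :: "nat set set \<Rightarrow> nat \<Rightarrow> nat \<Rightarrow> bool" where
  "adj E u v \<longleftrightarrow> u \<noteq> v \<and> {u, v} \<in> E"

definition degree :: "nat set set \<Rightarrow> nat \<Rightarrow> nat" where
  "degree E v = card {u. adj E u v}"

(* E realizes the sequence d (length n): vertex i has degree d!i.  Every graph with degree
   sequence d is isomorphic to such a labelled graph. *)
definition realization :: "nat list \<Rightarrow> nat set set \<Rightarrow> bool" where
  "realization d E \<longleftrightarrow> simple_graph (length d) E \<and> (\<forall>i<length d. degree E i = d ! i)"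

definition graphical :: "nat list \<Rightarrow> bool" where
  "graphical d \<longleftrightarrow> sorted d \<and> (\<exists>E. realization d E)"

definition forcibly :: "(nat \<Rightarrow> nat set set \<Rightarrow> bool) \<Rightarrow> nat list \<Rightarrow> bool" where
  "forcibly P d \<longleftrightarrow> (\<forall>E. realization d E \<longrightarrow> P (length d) E)"

definition termwise_le :: "nat list \<Rightarrow> nat list \<Rightarrow> bool" where
  "termwise_le d' d \<longleftrightarrow> length d' = length d \<and> (\<forall>i<length d. d' ! i \<le> d ! i)"

definition BM :: "(nat \<Rightarrow> nat set set \<Rightarrow> bool) \<Rightarrow> nat list set" where
  "BM P = {d. graphical d \<and> (\<forall>d'. graphical d' \<and> termwise_le d' d \<longrightarrow> forcibly P d')}"

definition colorable :: "nat \<Rightarrow> nat set set \<Rightarrow> nat \<Rightarrow> bool" where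
  "colorable n E m \<longleftrightarrow> (\<exists>c. (\<forall>v<n. c v < m) \<and> (\<forall>u<n. \<forall>v<n. adj E u v \<longrightarrow> c u \<noteq> c v))"

definition chromatic_number :: "nat \<Rightarrow> nat set set \<Rightarrow> nat" where
  "chromatic_number n E = (LEAST m. colorable n E m)"

definition is_cycle :: "nat set set \<Rightarrow> nat list \<Rightarrow> bool" where
  "is_cycle E cs \<longleftrightarrow> length cs \<ge> 3 \<and> distinct cs
     \<and> (\<forall>i. Suc i < length cs \<longrightarrow> adj E (cs ! i) (cs ! Suc i))
     \<and> adj E (last cs) (hd cs)"

definition induces_forest :: "nat set set \<Rightarrow> nat set \<Rightarrow> bool" where
  "induces_forest E S \<longleftrightarrow> \<not> (\<exists>cs. set cs \<subseteq> S \<and> is_cycle E cs)"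

definition forest_partitionable :: "nat \<Rightarrow> nat set set \<Rightarrow> nat \<Rightarrow> bool" where
  "forest_partitionable n E m \<longleftrightarrow> (\<exists>f. (\<forall>v<n. f v < m)
      \<and> (\<forall>j<m. induces_forest E {v. v < n \<and> f v = j}))"

definition vertex_arboricity :: "nat \<Rightarrow> nat set set \<Rightarrow> nat" where
  "vertex_arboricity n E = (LEAST m. forest_partitionable n E m)"

end

theory Submission
  imports Defs
begin

(* Let d lie in BM(chi <= 2k), let d' <= d be graphical and E a realization of d'.
   Call a vertex heavy if its degree is at least 2k.
   (1) If E has at most 2k heavy vertices, split them into k classes of size <= 2 (trivially
       forests) and insert the light vertices one at a time: a light vertex has < 2k
       neighbours, so by pigeonhole some class contains at most one of them, and adding a
       vertex with at most one neighbour in a forest keeps it a forest.  Hence a(E) <= k.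
   (2) If E has more than 2k heavy vertices, then since d is sorted and d' <= d, the last
       2k+1 entries of d are >= 2k.  So the sequence 0,...,0,2k,...,2k (2k+1 copies of 2k),
       realized by K_{2k+1} plus isolated vertices, is graphical and <= d; by hypothesis
       it is forcibly 2k-colourable, contradicting that K_{2k+1} needs 2k+1 colours. *)

lemma adj_sym: "adj E u v = adj E v u"
  unfolding adj_def by (auto simp: insert_commute)

lemma adj_less: "simple_graph n E \<Longrightarrow> adj E u v \<Longrightarrow> u < n \<and> v < n"
  unfolding adj_def simple_graph_def by auto

lemma finite_neighbours: "simple_graph n E \<Longrightarrow> finite {u. adj E u x}"
  by (rule finite_subset[of _ "{0..<n}"]) (auto dest: adj_less)

lemma cycle_two_neighbours:
  assumes cyc: "is_cycle E cs" and x: "x \<in> set cs"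
  shows "\<exists>a b. a \<in> set cs - {x} \<and> b \<in> set cs - {x} \<and> a \<noteq> b \<and> adj E x a \<and> adj E x b"
proof -
  obtain i where i: "i < length cs" "cs ! i = x" using x by (auto simp: in_set_conv_nth)
  define l where "l = length cs"
  have l3: "l \<ge> 3" and dist: "distinct cs" using cyc by (auto simp: is_cycle_def l_def)
  have step: "adj E (cs ! j) (cs ! ((j + 1) mod l))" if "j < l" for j
  proof (cases "Suc j < l")
    case True thus ?thesis using cyc by (auto simp: is_cycle_def l_def)
  next
    case False
    hence "j + 1 = l" using that by auto
    hence j: "j = l - 1" "(j + 1) mod l = 0" by auto
    have ne: "cs \<noteq> []" using l3 by (auto simp: l_def)
    have "adj E (last cs) (hd cs)" using cyc by (simp add: is_cycle_def)
    thus ?thesis using j by (simp add: last_conv_nth[OF ne] hd_conv_nth[OF ne] l_def)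
  qed
  have il: "i < l" using i by (simp add: l_def)
  define p where "p = (if i = 0 then l - 1 else i - 1)"
  define q where "q = (i + 1) mod l"
  have pl: "p < l" and ql: "q < l" using l3 il by (auto simp: p_def q_def)
  have p_next: "(p + 1) mod l = i" using il l3 unfolding p_def by auto
  have distinct_idx: "p \<noteq> i" "q \<noteq> i" "p \<noteq> q"
    using il l3 unfolding p_def q_def by (auto simp: mod_if)
  have "cs ! p \<noteq> cs ! i" "cs ! q \<noteq> cs ! i" "cs ! p \<noteq> cs ! q"
    using distinct_idx dist pl ql il nth_eq_iff_index_eq unfolding l_def by metis+
  moreover have "adj E x (cs ! p)" using step[OF pl] p_next i by (simp add: adj_sym)
  moreover have "adj E x (cs ! q)" using step[OF il] i by (simp add: q_def)
  ultimately show ?thesis using i pl ql unfolding l_def by (metis Diff_iff nth_mem singletonD)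
qed

lemma forest_insert:
  assumes forest: "induces_forest E S"
    and unique: "\<And>a b. a \<in> S \<Longrightarrow> b \<in> S \<Longrightarrow> adj E x a \<Longrightarrow> adj E x b \<Longrightarrow> a = b"
  shows "induces_forest E (insert x S)"
  unfolding induces_forest_def
proof
  assume "\<exists>cs. set cs \<subseteq> insert x S \<and> is_cycle E cs"
  then obtain cs where cs: "set cs \<subseteq> insert x S" "is_cycle E cs" by blast
  have "x \<in> set cs" using forest cs unfolding induces_forest_def by blast
  with cycle_two_neighbours[OF cs(2)] cs(1) unique show False by blast
qed

(* A cycle has at least three vertices, so sets of at most two vertices induce forests. *)
lemma small_set_forest:
  assumes "finite S" "card S \<le> 2"
  shows "induces_forest E S"
  unfolding induces_forest_def
proof
  assume "\<exists>cs. set cs \<subseteq> S \<and> is_cycle E cs"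
  then obtain cs where cs: "set cs \<subseteq> S" "is_cycle E cs" by blast
  have "3 \<le> card (set cs)" using cs(2) by (auto simp: is_cycle_def distinct_card)
  also have "\<dots> \<le> card S" using cs(1) assms(1) by (rule card_mono[rotated])
  finally show False using assms(2) by simp
qed

lemma sparse_class_exists:
  assumes "finite N" "card N < 2 * k" "\<forall>v\<in>N. f v < (k::nat)"
  shows "\<exists>j<k. card (N \<inter> {v. f v = j}) \<le> 1"
proof (rule ccontr)
  assume "\<not> ?thesis"
  hence dense: "\<forall>j<k. 2 \<le> card (N \<inter> {v. f v = j})" by auto
  have classes: "N = (\<Union>j\<in>{..<k}. N \<inter> {v. f v = j})" using assms(3) by auto
  have "card N = (\<Sum>j\<in>{..<k}. card (N \<inter> {v. f v = j}))"
    by (subst classes, rule card_UN_disjoint) (use assms(1) in auto)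
  also have "\<dots> \<ge> (\<Sum>j\<in>{..<k}. 2)" by (rule sum_mono) (use dense in auto)
  finally show False using assms(2) by simp
qed

definition forest_colouring :: "nat set set \<Rightarrow> nat \<Rightarrow> nat set \<Rightarrow> (nat \<Rightarrow> nat) \<Rightarrow> bool" where
  "forest_colouring E k A f \<longleftrightarrow> (\<forall>v\<in>A. f v < k) \<and> (\<forall>j<k. induces_forest E {v\<in>A. f v = j})"

lemma forest_colouring_extend:
  assumes sg: "simple_graph n E" and fin: "finite A" and x: "x \<notin> A"
    and deg: "degree E x < 2 * k" and fc: "forest_colouring E k A f"
  shows "\<exists>j. forest_colouring E k (insert x A) (f(x := j))"
proof -
  define N where "N = {u\<in>A. adj E x u}"
  have finN: "finite N" using fin by (simp add: N_def)
  have "N \<subseteq> {u. adj E u x}" by (auto simp: N_def adj_sym)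
  hence "card N \<le> degree E x" unfolding degree_def by (rule card_mono[OF finite_neighbours[OF sg]])
  hence "card N < 2 * k" using deg by linarith
  moreover have "\<forall>v\<in>N. f v < k" using fc by (auto simp: N_def forest_colouring_def)
  ultimately obtain j where j: "j < k" "card (N \<inter> {v. f v = j}) \<le> 1"
    using sparse_class_exists[OF finN] by blast
  have "card (N \<inter> {v. f v = j}) \<le> Suc 0" using j(2) by simp
  hence sparse: "\<forall>a\<in>N \<inter> {v. f v = j}. \<forall>b\<in>N \<inter> {v. f v = j}. a = b"
    using card_le_Suc0_iff_eq[of "N \<inter> {v. f v = j}"] finN by blast
  have "induces_forest E {v\<in>insert x A. (f(x:=j)) v = j'}" if j': "j' < k" for j'
  proof (cases "j' = j")
    case False
    hence "{v\<in>insert x A. (f(x:=j)) v = j'} = {v\<in>A. f v = j'}" using x by auto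
    thus ?thesis using fc j' by (simp add: forest_colouring_def)
  next
    case True
    hence eq: "{v\<in>insert x A. (f(x:=j)) v = j'} = insert x {v\<in>A. f v = j}" using x by auto
    have "a = b" if "a \<in> {v\<in>A. f v = j}" "b \<in> {v\<in>A. f v = j}" "adj E x a" "adj E x b" for a b
      using that sparse unfolding N_def by blast
    moreover have "induces_forest E {v\<in>A. f v = j}" using fc j(1) by (simp add: forest_colouring_def)
    ultimately show ?thesis unfolding eq by (intro forest_insert) auto
  qed
  moreover have "\<forall>v\<in>insert x A. (f(x := j)) v < k" using fc j(1) by (simp add: forest_colouring_def)
  ultimately show ?thesis unfolding forest_colouring_def by blast
qed

(* At most 2k vertices can be split into k pairs, each trivially a forest. *)
lemma forest_colouring_small:
  assumes fin: "finite B" and card: "card B \<le> 2 * k"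
  shows "\<exists>f. forest_colouring E k B f"
proof -
  obtain g where g: "bij_betw g B {0..<card B}" using ex_bij_betw_finite_nat[OF fin] by blast
  define f where "f v = g v div 2" for v
  have "f v < k" if "v \<in> B" for v
  proof -
    have "g v < card B" using g that unfolding bij_betw_def by auto
    hence "g v < 2 * k" using card by linarith
    thus ?thesis unfolding f_def by (simp add: less_mult_imp_div_less mult.commute)
  qed
  moreover have "induces_forest E {v\<in>B. f v = j}" for j
  proof (rule small_set_forest)
    let ?C = "{v\<in>B. f v = j}"
    have "g ` ?C \<subseteq> {2*j, 2*j+1}" unfolding f_def by auto
    moreover have "inj_on g ?C" using g unfolding bij_betw_def by (auto intro: inj_on_subset)
    ultimately have "card ?C \<le> card {2*j, 2*j+1}" by (intro card_inj_on_le) auto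
    thus "card ?C \<le> 2" by (simp add: card_insert_le_m1 le_trans)
  qed (use fin in simp)
  ultimately show ?thesis unfolding forest_colouring_def by blast
qed

definition heavy_vertices :: "nat \<Rightarrow> nat set set \<Rightarrow> nat \<Rightarrow> nat set" where
  "heavy_vertices n E t = {v. v < n \<and> t \<le> degree E v}"

lemma arboricity_few_heavy:
  assumes sg: "simple_graph n E" and few: "card (heavy_vertices n E (2 * k)) \<le> 2 * k"
  shows "vertex_arboricity n E \<le> k"
proof -
  let ?B = "heavy_vertices n E (2 * k)"
  have "\<exists>f. forest_colouring E k (?B \<union> L) f"
    if "finite L" "L \<subseteq> {0..<n} - ?B" for L
    using that
  proof (induction L rule: finite_induct)
    case empty thus ?case using forest_colouring_small[OF _ few] by (simp add: heavy_vertices_def)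
  next
    case (insert x L)
    then obtain f where fc: "forest_colouring E k (?B \<union> L) f" by auto
    have "finite (?B \<union> L)" using insert.hyps(1) by (simp add: heavy_vertices_def)
    moreover have "x \<notin> ?B \<union> L" "degree E x < 2 * k"
      using insert by (auto simp: heavy_vertices_def)
    ultimately obtain j where "forest_colouring E k (insert x (?B \<union> L)) (f(x := j))"
      using forest_colouring_extend[OF sg _ _ _ fc] by blast
    thus ?case by auto
  qed
  moreover have "?B \<union> ({0..<n} - ?B) = {v. v < n}" by (auto simp: heavy_vertices_def)
  ultimately obtain f where "forest_colouring E k {v. v < n} f"
    by (metis finite_Diff finite_atLeastLessThan order_refl)
  hence "forest_partitionable n E k" unfolding forest_partitionable_def forest_colouring_def by auto
  thus ?thesis unfolding vertex_arboricity_def by (rule Least_le)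
qed

lemma heavy_tail:
  assumes sorted: "sorted d" and le: "termwise_le d' d" and real: "realization d' E"
    and many: "r < card (heavy_vertices (length d) E t)"
    and i: "length d - (r + 1) \<le> i" "i < length d"
  shows "t \<le> d ! i"
proof (rule ccontr)
  assume "\<not> t \<le> d ! i"
  have "heavy_vertices (length d) E t \<subseteq> {Suc i..<length d}"
  proof
    fix v assume "v \<in> heavy_vertices (length d) E t"
    hence v: "v < length d" "t \<le> degree E v" by (auto simp: heavy_vertices_def)
    have "degree E v \<le> d ! v" using real le v(1) by (simp add: realization_def termwise_le_def)
    moreover have "v \<le> i \<Longrightarrow> d ! v \<le> d ! i" using sorted i by (simp add: sorted_nth_mono)
    ultimately have "i < v" using v \<open>\<not> t \<le> d ! i\<close> by (meson le_trans not_le)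
    thus "v \<in> {Suc i..<length d}" using v(1) by simp
  qed
  hence "card (heavy_vertices (length d) E t) \<le> length d - Suc i"
    using card_mono[of "{Suc i..<length d}"] by simp
  thus False using many i by linarith
qed

definition clique_edges :: "nat set \<Rightarrow> nat set set" where
  "clique_edges T = {{a, b} | a b. a \<in> T \<and> b \<in> T \<and> a \<noteq> b}"

lemma adj_clique_edges: "adj (clique_edges T) u v \<longleftrightarrow> u \<noteq> v \<and> u \<in> T \<and> v \<in> T"
  unfolding adj_def clique_edges_def by (auto simp: doubleton_eq_iff)

(* Degree sequence of K_r together with n - r isolated vertices. *)
definition clique_sequence :: "nat \<Rightarrow> nat \<Rightarrow> nat list" where
  "clique_sequence n r = replicate (n - r) 0 @ replicate r (r - 1)"

lemma clique_realization:
  assumes "r \<le> n"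
  shows "realization (clique_sequence n r) (clique_edges {n - r..<n})"
proof -
  let ?T = "{n - r..<n}" and ?d = "clique_sequence n r"
  have "simple_graph n (clique_edges ?T)"
    unfolding simple_graph_def clique_edges_def by auto
  moreover have "degree (clique_edges ?T) i = ?d ! i" if "i < n" for i
  proof (cases "i \<in> ?T")
    case True
    hence "{u. adj (clique_edges ?T) u i} = ?T - {i}" by (auto simp: adj_clique_edges)
    thus ?thesis using True assms that by (simp add: degree_def nth_append clique_sequence_def)
  next
    case False
    hence "{u. adj (clique_edges ?T) u i} = {}" by (auto simp: adj_clique_edges)
    thus ?thesis using False that by (simp add: degree_def nth_append clique_sequence_def)
  qed
  ultimately show ?thesis using assms by (simp add: realization_def clique_sequence_def)
qed

lemma length_clique_sequence: "r \<le> n \<Longrightarrow> length (clique_sequence n r) = n"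
  by (simp add: clique_sequence_def)

lemma clique_sequence_graphical: "r \<le> n \<Longrightarrow> graphical (clique_sequence n r)"
  using clique_realization unfolding graphical_def clique_sequence_def
  by (auto simp: sorted_append)

lemma clique_sequence_below:
  assumes sorted: "sorted d" and le: "termwise_le d' d" and real: "realization d' E"
    and many: "r < card (heavy_vertices (length d) E r)"
  shows "r + 1 \<le> length d" and "termwise_le (clique_sequence (length d) (r + 1)) d"
proof -
  have "heavy_vertices (length d) E r \<subseteq> {0..<length d}" by (auto simp: heavy_vertices_def)
  hence "card (heavy_vertices (length d) E r) \<le> length d"
    by (metis card_atLeastLessThan card_mono diff_zero finite_atLeastLessThan)
  thus r: "r + 1 \<le> length d" using many by simp
  show "termwise_le (clique_sequence (length d) (r + 1)) d" unfolding termwise_le_def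
  proof (intro conjI allI impI)
    show "length (clique_sequence (length d) (r + 1)) = length d"
      using r by (rule length_clique_sequence)
    fix i assume "i < length d"
    thus "clique_sequence (length d) (r + 1) ! i \<le> d ! i"
      using heavy_tail[OF sorted le real many, of i] r
      by (auto simp: clique_sequence_def nth_append simp del: replicate_Suc)
  qed
qed

lemma clique_le_chromatic_number:
  assumes T: "T \<subseteq> {0..<n}" and clique: "\<And>u v. u \<in> T \<Longrightarrow> v \<in> T \<Longrightarrow> u \<noteq> v \<Longrightarrow> adj E u v"
  shows "card T \<le> chromatic_number n E"
proof -
  have "colorable n E n" unfolding colorable_def by (rule exI[of _ id]) (auto simp: adj_def)
  hence "colorable n E (chromatic_number n E)" unfolding chromatic_number_def by (rule LeastI)
  then obtain c where c: "\<forall>v<n. c v < chromatic_number n E"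
    "\<forall>u<n. \<forall>v<n. adj E u v \<longrightarrow> c u \<noteq> c v" unfolding colorable_def by blast
  have "inj_on c T"
  proof (rule inj_onI, rule ccontr)
    fix u v assume "u \<in> T" "v \<in> T" "c u = c v" "u \<noteq> v"
    moreover have "u < n" "v < n" using T \<open>u \<in> T\<close> \<open>v \<in> T\<close> by auto
    ultimately show False using c(2) clique[of u v] by blast
  qed
  moreover have "c ` T \<subseteq> {0..<chromatic_number n E}" using c(1) T by auto
  ultimately have "card T \<le> card {0..<chromatic_number n E}" by (intro card_inj_on_le) auto
  thus ?thesis by simp
qed

lemma chromatic_number_clique: "r \<le> n \<Longrightarrow> r \<le> chromatic_number n (clique_edges {n - r..<n})"
  using clique_le_chromatic_number[of "{n - r..<n}" n] by (simp add: adj_clique_edges)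

theorem mainTheorem12:
  fixes k :: nat
  assumes "k \<ge> 1"
  shows "BM (\<lambda>n E. chromatic_number n E \<le> 2 * k) \<subseteq> BM (\<lambda>n E. vertex_arboricity n E \<le> k)"
proof
  fix d assume "d \<in> BM (\<lambda>n E. chromatic_number n E \<le> 2 * k)"
  hence graph_d: "graphical d" and colour: "\<And>d'. graphical d' \<Longrightarrow> termwise_le d' d \<Longrightarrow>
      forcibly (\<lambda>n E. chromatic_number n E \<le> 2 * k) d'" by (auto simp: BM_def)
  let ?n = "length d"
  have "vertex_arboricity ?n E \<le> k" if le: "termwise_le d' d" and real: "realization d' E" for d' E
  proof (rule arboricity_few_heavy)
    show "simple_graph ?n E" using le real by (simp add: realization_def termwise_le_def)
    show "card (heavy_vertices ?n E (2 * k)) \<le> 2 * k"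
    proof (rule ccontr)
      assume "\<not> ?thesis"
      hence many: "2 * k < card (heavy_vertices ?n E (2 * k))" by simp
      let ?K = "clique_sequence ?n (2 * k + 1)" and ?C = "clique_edges {?n - (2 * k + 1)..<?n}"
      have sorted_d: "sorted d" using graph_d by (simp add: graphical_def)
      note r = clique_sequence_below(1)[OF sorted_d le real many]
      have "forcibly (\<lambda>n E. chromatic_number n E \<le> 2 * k) ?K"
        using colour clique_sequence_graphical[OF r] clique_sequence_below(2)[OF sorted_d le real many]
        by blast
      hence "chromatic_number ?n ?C \<le> 2 * k"
        using clique_realization[OF r] length_clique_sequence[OF r] unfolding forcibly_def by metis
      thus False using chromatic_number_clique[OF r] by simp
    qed
  qed
  thus "d \<in> BM (\<lambda>n E. vertex_arboricity n E \<le> k)"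
    using graph_d by (auto simp: BM_def forcibly_def termwise_le_def)
qed

end
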